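(* Let $B\ge0$, $L\ge2$, let $\Lambda\subset\mathbb{Z}$ be a finite set containing $\{1,\dots,L\}$ and let $\alpha=(\alpha_x)_{x\in\Lambda}$ take values in $[-B,B]$. Let $\mu$ be a Bernoulli measure on $\{0,1\}^\Lambda$ with external field $\alpha$, i.e. either the product measure with $\mu(\eta_x=1)=e^{\alpha_x+\lambda}/(1+e^{\alpha_x+\lambda})$ for some $\lambda\in\mathbb{R}$, or the measure proportional to $\exp\{\sum_{x\in\Lambda}\alpha_x\eta_x\}$ on configurations with a fixed number of particles. Then for every $f:\{0,1\}^\Lambda\to\mathbb{R}$, $$\int[f(T_{1L}\eta)-f(\eta)]^2d\mu(\eta)\le e^{13B}L\sum_{1\le x\le L-1}\int(\nabla_{x,x+1}f)^2d\mu(\eta).$$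
   Context: $T_{xy}\eta$ denotes $\eta$ with the occupations at $x$ and $y$ exchanged, and $\nabla_{xy}f(\eta)=f(T_{xy}\eta)-f(\eta)$. *)

theory Defs
  imports Complex_Main
begin

text \<open>Configurations on a finite set \<Lambda> of integer sites: occupation variables in {0,1}
  on \<Lambda>, fixed to 0 outside \<Lambda> (so that {0,1}^\<Lambda> is represented faithfully).\<close>
definition configs :: "int set \<Rightarrow> (int \<Rightarrow> nat) set" where
  "configs \<Lambda> = {\<eta>. (\<forall>x\<in>\<Lambda>. \<eta> x \<le> 1) \<and> (\<forall>x. x \<notin> \<Lambda> \<longrightarrow> \<eta> x = 0)}"

definition exch :: "int \<Rightarrow> int \<Rightarrow> (int \<Rightarrow> nat) \<Rightarrow> (int \<Rightarrow> nat)" where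
  "exch x y \<eta> = \<eta>(x := \<eta> y, y := \<eta> x)"

definition grad :: "int \<Rightarrow> int \<Rightarrow> ((int \<Rightarrow> nat) \<Rightarrow> real) \<Rightarrow> (int \<Rightarrow> nat) \<Rightarrow> real" where
  "grad x y f \<eta> = f (exch x y \<eta>) - f \<eta>"

definition gc_bernoulli :: "int set \<Rightarrow> (int \<Rightarrow> real) \<Rightarrow> real \<Rightarrow> (int \<Rightarrow> nat) \<Rightarrow> real" where
  "gc_bernoulli \<Lambda> \<alpha> lam \<eta> =
     (\<Prod>x\<in>\<Lambda>. let p = exp (\<alpha> x + lam) / (1 + exp (\<alpha> x + lam))
               in if \<eta> x = 1 then p else 1 - p)"

definition can_bernoulli :: "int set \<Rightarrow> (int \<Rightarrow> real) \<Rightarrow> nat \<Rightarrow> (int \<Rightarrow> nat) \<Rightarrow> real" where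
  "can_bernoulli \<Lambda> \<alpha> K \<eta> =
     (if (\<Sum>x\<in>\<Lambda>. \<eta> x) = K
      then exp (\<Sum>x\<in>\<Lambda>. \<alpha> x * real (\<eta> x)) /
           (\<Sum>\<zeta>\<in>{\<zeta>\<in>configs \<Lambda>. (\<Sum>x\<in>\<Lambda>. \<zeta> x) = K}. exp (\<Sum>x\<in>\<Lambda>. \<alpha> x * real (\<zeta> x)))
      else 0)"

definition bernoulli_measure :: "int set \<Rightarrow> (int \<Rightarrow> real) \<Rightarrow> ((int \<Rightarrow> nat) \<Rightarrow> real) \<Rightarrow> bool" where
  "bernoulli_measure \<Lambda> \<alpha> \<mu> \<longleftrightarrow>
     (\<exists>lam. \<mu> = gc_bernoulli \<Lambda> \<alpha> lam) \<or>
     (\<exists>K. K \<le> card \<Lambda> \<and> \<mu> = can_bernoulli \<Lambda> \<alpha> K)"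

definition integ :: "int set \<Rightarrow> ((int \<Rightarrow> nat) \<Rightarrow> real) \<Rightarrow> ((int \<Rightarrow> nat) \<Rightarrow> real) \<Rightarrow> real" where
  "integ \<Lambda> \<mu> g = (\<Sum>\<eta>\<in>configs \<Lambda>. \<mu> \<eta> * g \<eta>)"

end

theory Submission
  imports Defs
begin

(* Since configurations take values in {0,1}, for x < y < z the occupation at y agrees with
   the one at x or at z, so T_xz eta is T_xy T_yz eta or T_yz T_xy eta. Splitting
   (u + v)^2 <= (z-x)/(z-y) u^2 + (z-x)/(y-x) v^2 and changing variables eta -> T eta bounds the
   cost of the bond (x,z) by costs of (y,z) and (x,y) with weights inversely proportional to
   their lengths; recursing down to nearest-neighbour bonds produces the factor L - 1.
   Each change of variables multiplies the measure by exp((alpha_x - alpha_y)(eta_y - eta_x)).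
   These factors do not accumulate if y is a site of maximal field inside (x,z) and the weight
   carries exp(-a eta_x - c eta_z), with a and c bounds for the field on [x,z) and (x,z]: after
   the split the weights are dominated by the same kind of weight with (a, c) replaced by
   (alpha_y, c) and (a, alpha_y). Powers of e^B are lost only at the nearest-neighbour bonds
   (e^B) and in the initial comparison of mu with the weight (e^(5B)). *)

lemma configs_values: "\<xi> \<in> configs \<Lambda> \<Longrightarrow> x \<in> \<Lambda> \<Longrightarrow> \<xi> x = 0 \<or> \<xi> x = 1"
  unfolding configs_def by fastforce

lemma exch_in_configs: "\<xi> \<in> configs \<Lambda> \<Longrightarrow> a \<in> \<Lambda> \<Longrightarrow> b \<in> \<Lambda> \<Longrightarrow> exch a b \<xi> \<in> configs \<Lambda>"
  unfolding configs_def exch_def by auto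

lemma exch_apply: "exch a b \<xi> v = (if v = b then \<xi> a else if v = a then \<xi> b else \<xi> v)"
  unfolding exch_def by auto

lemma exch_exch [simp]: "exch a b (exch a b \<xi>) = \<xi>"
  unfolding exch_def by (auto simp: fun_eq_iff)

lemma exch_trivial: "\<xi> a = \<xi> b \<Longrightarrow> exch a b \<xi> = \<xi>"
  unfolding exch_def by (auto simp: fun_eq_iff)

lemma exch_commute: "exch a b = exch b a"
  unfolding exch_def by (auto simp: fun_eq_iff)

lemma exch_through_left:
  assumes "\<xi> y = \<xi> x" "x \<noteq> y" "y \<noteq> z" "x \<noteq> z"
  shows "exch x z \<xi> = exch x y (exch y z \<xi>)"
  using assms by (auto simp: fun_eq_iff exch_apply)

lemma exch_through_right:
  assumes "\<xi> y = \<xi> z" "x \<noteq> y" "y \<noteq> z" "x \<noteq> z"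
  shows "exch x z \<xi> = exch y z (exch x y \<xi>)"
  using assms by (auto simp: fun_eq_iff exch_apply)

lemma sum_configs_exch:
  assumes "a \<in> \<Lambda>" "b \<in> \<Lambda>"
  shows "(\<Sum>\<xi>\<in>configs \<Lambda>. h (exch a b \<xi>)) = (\<Sum>\<xi>\<in>configs \<Lambda>. h \<xi>)"
  by (rule sum.reindex_bij_witness[where i="exch a b" and j="exch a b"])
     (auto simp: exch_in_configs assms)

lemma sum_exch:
  fixes h :: "int \<Rightarrow> nat \<Rightarrow> 'a::ab_group_add"
  assumes "finite \<Lambda>" "a \<in> \<Lambda>" "b \<in> \<Lambda>"
  shows "(\<Sum>x\<in>\<Lambda>. h x (exch a b \<xi> x))
       = (\<Sum>x\<in>\<Lambda>. h x (\<xi> x)) + (h a (\<xi> b) - h a (\<xi> a)) + (h b (\<xi> a) - h b (\<xi> b))"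
proof (cases "a = b")
  case True
  then show ?thesis by (simp add: exch_trivial)
next
  case False
  have "h x (exch a b \<xi> x) = h x (\<xi> x) + (if x = a then h a (\<xi> b) - h a (\<xi> a) else 0)
                                     + (if x = b then h b (\<xi> a) - h b (\<xi> b) else 0)" for x
    using False by (simp add: exch_apply)
  then show ?thesis
    using assms by (simp add: sum.distrib)
qed

definition energy :: "int set \<Rightarrow> (int \<Rightarrow> real) \<Rightarrow> (int \<Rightarrow> nat) \<Rightarrow> real" where
  "energy \<Lambda> \<alpha> \<xi> = (\<Sum>x\<in>\<Lambda>. \<alpha> x * real (\<xi> x))"

lemma energy_exch:
  assumes "finite \<Lambda>" "a \<in> \<Lambda>" "b \<in> \<Lambda>"
  shows "energy \<Lambda> \<alpha> (exch a b \<xi>) = energy \<Lambda> \<alpha> \<xi> + (\<alpha> a - \<alpha> b) * (real (\<xi> b) - real (\<xi> a))"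
  using sum_exch[OF assms, of "\<lambda>x v. \<alpha> x * real v"] unfolding energy_def by (simp add: algebra_simps)

lemma particle_count_exch:
  assumes "finite \<Lambda>" "a \<in> \<Lambda>" "b \<in> \<Lambda>"
  shows "(\<Sum>x\<in>\<Lambda>. exch a b \<xi> x) = (\<Sum>x\<in>\<Lambda>. \<xi> x)"
  using sum_exch[OF assms, of "\<lambda>x v. int v"] by (simp flip: of_nat_sum)

lemma gc_bernoulli_gibbs_form:
  assumes "finite \<Lambda>" "\<xi> \<in> configs \<Lambda>"
  shows "gc_bernoulli \<Lambda> \<alpha> lam \<xi>
       = exp (lam * real (\<Sum>x\<in>\<Lambda>. \<xi> x)) / (\<Prod>x\<in>\<Lambda>. 1 + exp (\<alpha> x + lam)) * exp (energy \<Lambda> \<alpha> \<xi>)"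
proof -
  have site: "(let p = exp (\<alpha> x + lam) / (1 + exp (\<alpha> x + lam)) in if \<xi> x = 1 then p else 1 - p)
            = exp ((\<alpha> x + lam) * real (\<xi> x)) / (1 + exp (\<alpha> x + lam))" if "x \<in> \<Lambda>" for x
  proof -
    have "1 + exp (\<alpha> x + lam) > 0" by (simp add: add_pos_pos)
    then have "1 - exp (\<alpha> x + lam) / (1 + exp (\<alpha> x + lam)) = 1 / (1 + exp (\<alpha> x + lam))"
      by (simp add: field_simps)
    then show ?thesis using configs_values[OF assms(2) that] by auto
  qed
  have "gc_bernoulli \<Lambda> \<alpha> lam \<xi> = (\<Prod>x\<in>\<Lambda>. exp ((\<alpha> x + lam) * real (\<xi> x)) / (1 + exp (\<alpha> x + lam)))"
    unfolding gc_bernoulli_def by (rule prod.cong[OF refl site])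
  also have "\<dots> = exp (\<Sum>x\<in>\<Lambda>. (\<alpha> x + lam) * real (\<xi> x)) / (\<Prod>x\<in>\<Lambda>. 1 + exp (\<alpha> x + lam))"
    using assms(1) by (simp add: exp_sum prod_dividef)
  also have "(\<Sum>x\<in>\<Lambda>. (\<alpha> x + lam) * real (\<xi> x)) = energy \<Lambda> \<alpha> \<xi> + lam * real (\<Sum>x\<in>\<Lambda>. \<xi> x)"
    unfolding energy_def by (simp add: algebra_simps sum.distrib sum_distrib_left)
  finally show ?thesis by (simp add: exp_add)
qed

lemma can_bernoulli_gibbs_form:
  "can_bernoulli \<Lambda> \<alpha> K \<xi>
     = (if (\<Sum>x\<in>\<Lambda>. \<xi> x) = K then 1 / (\<Sum>\<zeta>\<in>{\<zeta>\<in>configs \<Lambda>. (\<Sum>x\<in>\<Lambda>. \<zeta> x) = K}. exp (energy \<Lambda> \<alpha> \<zeta>)) else 0)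
       * exp (energy \<Lambda> \<alpha> \<xi>)"
  unfolding can_bernoulli_def energy_def by simp

locale exchange_covariant =
  fixes \<Lambda> :: "int set" and \<alpha> :: "int \<Rightarrow> real" and \<mu> :: "(int \<Rightarrow> nat) \<Rightarrow> real"
  assumes nonneg: "\<xi> \<in> configs \<Lambda> \<Longrightarrow> 0 \<le> \<mu> \<xi>"
    and exch: "\<xi> \<in> configs \<Lambda> \<Longrightarrow> a \<in> \<Lambda> \<Longrightarrow> b \<in> \<Lambda> \<Longrightarrow>
      \<mu> (exch a b \<xi>) = exp ((\<alpha> a - \<alpha> b) * (real (\<xi> b) - real (\<xi> a))) * \<mu> \<xi>"

lemma exchange_covariant_gibbs_form:
  assumes "finite \<Lambda>" and "\<And>n. 0 \<le> G n"
    and "\<And>\<xi>. \<xi> \<in> configs \<Lambda> \<Longrightarrow> \<mu> \<xi> = G (\<Sum>x\<in>\<Lambda>. \<xi> x) * exp (energy \<Lambda> \<alpha> \<xi>)"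
  shows "exchange_covariant \<Lambda> \<alpha> \<mu>"
proof
  fix \<xi> a b assume \<xi>: "\<xi> \<in> configs \<Lambda>" and ab: "a \<in> \<Lambda>" "b \<in> \<Lambda>"
  show "\<mu> (exch a b \<xi>) = exp ((\<alpha> a - \<alpha> b) * (real (\<xi> b) - real (\<xi> a))) * \<mu> \<xi>"
    using assms(3)[OF \<xi>] assms(3)[OF exch_in_configs[OF \<xi> ab]]
    by (simp add: particle_count_exch energy_exch exp_add assms(1) ab)
qed (use assms in simp)

lemma bernoulli_measure_exchange_covariant:
  assumes "finite \<Lambda>" and "bernoulli_measure \<Lambda> \<alpha> \<mu>"
  shows "exchange_covariant \<Lambda> \<alpha> \<mu>"
  using assms(2) unfolding bernoulli_measure_def
proof (elim disjE exE conjE)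
  fix lam assume "\<mu> = gc_bernoulli \<Lambda> \<alpha> lam"
  then show ?thesis
    by (intro exchange_covariant_gibbs_form[OF assms(1),
          where G="\<lambda>n. exp (lam * real n) / (\<Prod>x\<in>\<Lambda>. 1 + exp (\<alpha> x + lam))"])
       (simp_all add: gc_bernoulli_gibbs_form assms(1) prod_nonneg add_nonneg_nonneg)
next
  fix K assume "\<mu> = can_bernoulli \<Lambda> \<alpha> K"
  then show ?thesis
    by (intro exchange_covariant_gibbs_form[OF assms(1)])
       (simp_all add: can_bernoulli_gibbs_form sum_nonneg)
qed

abbreviation dirichlet ::
    "int set \<Rightarrow> ((int \<Rightarrow> nat) \<Rightarrow> real) \<Rightarrow> ((int \<Rightarrow> nat) \<Rightarrow> real) \<Rightarrow> int \<Rightarrow> int \<Rightarrow> real" where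
  "dirichlet \<Lambda> w f x z \<equiv> integ \<Lambda> w (\<lambda>\<eta>. (grad x z f \<eta>)^2)"

lemma dirichlet_nonneg:
  "(\<And>\<xi>. \<xi> \<in> configs \<Lambda> \<Longrightarrow> 0 \<le> w \<xi>) \<Longrightarrow> 0 \<le> dirichlet \<Lambda> w f x z"
  unfolding integ_def by (auto intro!: sum_nonneg)

lemma dirichlet_le_scaled:
  assumes "\<And>\<xi>. \<xi> \<in> configs \<Lambda> \<Longrightarrow> \<xi> x \<noteq> \<xi> z \<Longrightarrow> w \<xi> \<le> C * w' \<xi>"
  shows "dirichlet \<Lambda> w f x z \<le> C * dirichlet \<Lambda> w' f x z"
  unfolding integ_def sum_distrib_left
proof (rule sum_mono)
  fix \<xi> assume "\<xi> \<in> configs \<Lambda>"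
  then show "w \<xi> * (grad x z f \<xi>)^2 \<le> C * (w' \<xi> * (grad x z f \<xi>)^2)"
    using assms by (cases "\<xi> x = \<xi> z") (auto simp: grad_def exch_trivial mult.assoc[symmetric] intro: mult_right_mono)
qed

lemma power2_sum_le_weighted:
  fixes u v s t :: real
  assumes "s > 0" "t > 0"
  shows "(u + v)^2 \<le> (s + t) / s * u^2 + (s + t) / t * v^2"
proof -
  have "(s + t) / s * u^2 + (s + t) / t * v^2 - (u + v)^2 = (t * u - s * v)^2 / (s * t)"
    using assms by (simp add: field_simps power2_eq_square)
  moreover have "0 \<le> (t * u - s * v)^2 / (s * t)"
    using assms by simp
  ultimately show ?thesis by linarith
qed

lemma grad_sq_le_path:
  fixes f :: "(int \<Rightarrow> nat) \<Rightarrow> real"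
  assumes "x < y" "y < z" and "\<xi> x = \<xi> z \<or> \<xi> x = \<xi> y \<or> \<xi> y = \<xi> z"
  shows "(grad x z f \<xi>)^2 \<le> real_of_int (z - x) / real_of_int (z - y) * (grad y z f (exch x y \<xi>))^2
                          + real_of_int (z - x) / real_of_int (y - x) * (grad x y f (exch y z \<xi>))^2"
    (is "_ \<le> ?p * ?u^2 + ?q * ?v^2")
proof -
  have pq: "?p = (real_of_int (z - y) + real_of_int (y - x)) / real_of_int (z - y)"
           "?q = (real_of_int (z - y) + real_of_int (y - x)) / real_of_int (y - x)"
    by simp_all
  have weighted: "(?u + ?v)^2 \<le> ?p * ?u^2 + ?q * ?v^2"
    unfolding pq by (rule power2_sum_le_weighted) (use assms in auto)
  from assms(3) consider "\<xi> x = \<xi> z" | "\<xi> x = \<xi> y" | "\<xi> y = \<xi> z" by blast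
  then show ?thesis
  proof cases
    case 1
    then have "grad x z f \<xi> = 0" by (simp add: grad_def exch_trivial)
    moreover have "0 \<le> ?p * ?u^2 + ?q * ?v^2"
      using assms by (intro add_nonneg_nonneg mult_nonneg_nonneg) auto
    ultimately show ?thesis by simp
  next
    case 2
    have "exch x z \<xi> = exch x y (exch y z \<xi>)"
      by (rule exch_through_left) (use 2 assms in auto)
    then have "grad x z f \<xi> = ?u + ?v" by (simp add: grad_def exch_trivial[OF 2])
    with weighted show ?thesis by (simp only:)
  next
    case 3
    have "exch x z \<xi> = exch y z (exch x y \<xi>)"
      by (rule exch_through_right) (use 3 assms in auto)
    then have "grad x z f \<xi> = ?u + ?v" by (simp add: grad_def exch_trivial[OF 3])
    with weighted show ?thesis by (simp only:)
  qed
qed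

lemma dirichlet_split:
  assumes "x < y" "y < z" "{x, y, z} \<subseteq> \<Lambda>" and w: "\<And>\<xi>. \<xi> \<in> configs \<Lambda> \<Longrightarrow> 0 \<le> w \<xi>"
  shows "dirichlet \<Lambda> w f x z
    \<le> real_of_int (z - x) / real_of_int (z - y) * dirichlet \<Lambda> (\<lambda>\<xi>. w (exch x y \<xi>)) f y z
     + real_of_int (z - x) / real_of_int (y - x) * dirichlet \<Lambda> (\<lambda>\<xi>. w (exch y z \<xi>)) f x y"
    (is "_ \<le> ?p * _ + ?q * _")
proof -
  have transfer: "(\<Sum>\<xi>\<in>configs \<Lambda>. w \<xi> * (grad u v f (exch a b \<xi>))^2) = dirichlet \<Lambda> (\<lambda>\<xi>. w (exch a b \<xi>)) f u v"
    if "a \<in> \<Lambda>" "b \<in> \<Lambda>" for a b u v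
    using sum_configs_exch[OF that, of "\<lambda>\<xi>. w (exch a b \<xi>) * (grad u v f \<xi>)^2"] by (simp add: integ_def)
  have "dirichlet \<Lambda> w f x z \<le> (\<Sum>\<xi>\<in>configs \<Lambda>.
      ?p * (w \<xi> * (grad y z f (exch x y \<xi>))^2) + ?q * (w \<xi> * (grad x y f (exch y z \<xi>))^2))"
    unfolding integ_def
  proof (rule sum_mono)
    fix \<xi> assume \<xi>: "\<xi> \<in> configs \<Lambda>"
    have two_agree: "\<xi> x = \<xi> z \<or> \<xi> x = \<xi> y \<or> \<xi> y = \<xi> z"
      using configs_values[OF \<xi>, of x] configs_values[OF \<xi>, of y] configs_values[OF \<xi>, of z] assms(3)
      by auto
    have "w \<xi> * (grad x z f \<xi>)^2
        \<le> w \<xi> * (?p * (grad y z f (exch x y \<xi>))^2 + ?q * (grad x y f (exch y z \<xi>))^2)"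
      by (rule mult_left_mono[OF grad_sq_le_path[OF assms(1,2) two_agree] w[OF \<xi>]])
    then show "w \<xi> * (grad x z f \<xi>)^2
        \<le> ?p * (w \<xi> * (grad y z f (exch x y \<xi>))^2) + ?q * (w \<xi> * (grad x y f (exch y z \<xi>))^2)"
      by (simp only: distrib_left mult.left_commute)
  qed
  also have "\<dots> = ?p * (\<Sum>\<xi>\<in>configs \<Lambda>. w \<xi> * (grad y z f (exch x y \<xi>))^2)
                  + ?q * (\<Sum>\<xi>\<in>configs \<Lambda>. w \<xi> * (grad x y f (exch y z \<xi>))^2)"
    by (simp only: sum.distrib sum_distrib_left)
  also have "\<dots> = ?p * dirichlet \<Lambda> (\<lambda>\<xi>. w (exch x y \<xi>)) f y z + ?q * dirichlet \<Lambda> (\<lambda>\<xi>. w (exch y z \<xi>)) f x y"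
    using assms(3) by (simp add: transfer)
  finally show ?thesis .
qed

lemma finite_obtains_argmax:
  fixes f :: "'a \<Rightarrow> 'b::linorder"
  assumes "finite A" "A \<noteq> {}"
  obtains y where "y \<in> A" "\<forall>v\<in>A. f v \<le> f y"
proof -
  obtain y where "y \<in> A" "Max (f ` A) = f y"
    using obtains_MAX[OF assms] .
  moreover have "f v \<le> Max (f ` A)" if "v \<in> A" for v
    using assms(1) that by (intro Max_ge) auto
  ultimately show ?thesis using that by auto
qed

context exchange_covariant
begin

text \<open>The prefactor \<open>exp (\<alpha> x - a + \<alpha> z - c)\<close> makes the bound in
  \<open>dirichlet_tilted_le\<close> independent of \<open>a\<close> and \<open>c\<close>.\<close>

definition tilted :: "int \<Rightarrow> real \<Rightarrow> int \<Rightarrow> real \<Rightarrow> (int \<Rightarrow> nat) \<Rightarrow> real" where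
  "tilted x a z c \<xi> = exp (\<alpha> x - a + \<alpha> z - c - a * real (\<xi> x) - c * real (\<xi> z)) * \<mu> \<xi>"

lemma tilted_nonneg: "\<xi> \<in> configs \<Lambda> \<Longrightarrow> 0 \<le> tilted x a z c \<xi>"
  unfolding tilted_def by (simp add: nonneg)

lemma tilted_commute: "tilted x a z c = tilted z c x a"
  unfolding tilted_def by (auto simp: fun_eq_iff algebra_simps)

lemma tilted_exch_le:
  assumes \<zeta>: "\<zeta> \<in> configs \<Lambda>" and "x \<in> \<Lambda>" "y \<in> \<Lambda>" "z \<noteq> x" "z \<noteq> y" "\<alpha> x \<le> a" "\<alpha> y \<le> a"
  shows "tilted x a z c (exch x y \<zeta>) \<le> tilted y (\<alpha> y) z c \<zeta>"
proof -
  have "tilted x a z c (exch x y \<zeta>)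
      = exp (\<alpha> x - a + \<alpha> z - c - a * real (\<zeta> y) - c * real (\<zeta> z)
             + (\<alpha> x - \<alpha> y) * (real (\<zeta> y) - real (\<zeta> x))) * \<mu> \<zeta>"
    using assms unfolding tilted_def by (simp add: exch exch_apply exp_add)
  also have "\<dots> \<le> exp (\<alpha> y - \<alpha> y + \<alpha> z - c - \<alpha> y * real (\<zeta> y) - c * real (\<zeta> z)) * \<mu> \<zeta>"
    using configs_values[OF \<zeta>, of x] configs_values[OF \<zeta>, of y] assms
    by (intro mult_right_mono nonneg) auto
  finally show ?thesis unfolding tilted_def .
qed

lemma dirichlet_tilted_le_exp:
  assumes "x \<in> \<Lambda>" "z \<in> \<Lambda>" "\<alpha> x \<le> a" "\<alpha> z \<le> c" "- B \<le> \<alpha> x" "- B \<le> \<alpha> z"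
  shows "dirichlet \<Lambda> (tilted x a z c) f x z \<le> exp B * dirichlet \<Lambda> \<mu> f x z"
proof (rule dirichlet_le_scaled)
  fix \<xi> assume \<xi>: "\<xi> \<in> configs \<Lambda>" and "\<xi> x \<noteq> \<xi> z"
  then have "\<alpha> x - a + \<alpha> z - c - a * real (\<xi> x) - c * real (\<xi> z) \<le> B"
    using configs_values[OF \<xi> assms(1)] configs_values[OF \<xi> assms(2)] assms(3-6) by auto
  then show "tilted x a z c \<xi> \<le> exp B * \<mu> \<xi>"
    unfolding tilted_def using nonneg[OF \<xi>] by (intro mult_right_mono) auto
qed

lemma dirichlet_tilted_split:
  assumes "x < y" "y < z" "{x, y, z} \<subseteq> \<Lambda>" "\<alpha> x \<le> a" "\<alpha> y \<le> a" "\<alpha> y \<le> c" "\<alpha> z \<le> c"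
  shows "dirichlet \<Lambda> (tilted x a z c) f x z
    \<le> real_of_int (z - x) / real_of_int (z - y) * dirichlet \<Lambda> (tilted y (\<alpha> y) z c) f y z
     + real_of_int (z - x) / real_of_int (y - x) * dirichlet \<Lambda> (tilted x a y (\<alpha> y)) f x y"
proof -
  have right: "dirichlet \<Lambda> (\<lambda>\<xi>. tilted x a z c (exch x y \<xi>)) f y z \<le> dirichlet \<Lambda> (tilted y (\<alpha> y) z c) f y z"
    using assms by (intro dirichlet_le_scaled[where C=1, simplified]) (simp add: tilted_exch_le)
  have left: "dirichlet \<Lambda> (\<lambda>\<xi>. tilted x a z c (exch y z \<xi>)) f x y \<le> dirichlet \<Lambda> (tilted x a y (\<alpha> y)) f x y"
    unfolding tilted_commute[of x a] exch_commute[of y z]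
    using assms by (intro dirichlet_le_scaled[where C=1, simplified]) (simp add: tilted_exch_le)
  have "dirichlet \<Lambda> (tilted x a z c) f x z
    \<le> real_of_int (z - x) / real_of_int (z - y) * dirichlet \<Lambda> (\<lambda>\<xi>. tilted x a z c (exch x y \<xi>)) f y z
     + real_of_int (z - x) / real_of_int (y - x) * dirichlet \<Lambda> (\<lambda>\<xi>. tilted x a z c (exch y z \<xi>)) f x y"
    using assms(1-3) by (rule dirichlet_split) (rule tilted_nonneg)
  also have "\<dots> \<le> real_of_int (z - x) / real_of_int (z - y) * dirichlet \<Lambda> (tilted y (\<alpha> y) z c) f y z
     + real_of_int (z - x) / real_of_int (y - x) * dirichlet \<Lambda> (tilted x a y (\<alpha> y)) f x y"
    using right left assms(1,2) by (intro add_mono mult_left_mono) auto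
  finally show ?thesis .
qed

lemma dirichlet_tilted_le:
  assumes "{x..z} \<subseteq> \<Lambda>" "x < z"
    and "\<forall>v\<in>{x..<z}. \<alpha> v \<le> a" "\<forall>v\<in>{x<..z}. \<alpha> v \<le> c" "\<forall>v\<in>{x..z}. - B \<le> \<alpha> v"
  shows "dirichlet \<Lambda> (tilted x a z c) f x z
    \<le> exp B * real_of_int (z - x) * (\<Sum>e\<in>{x..z-1}. dirichlet \<Lambda> \<mu> f e (e + 1))"
  using assms
proof (induction "nat (z - x)" arbitrary: x z a c rule: less_induct)
  case less
  let ?S = "\<lambda>u v. \<Sum>e\<in>{u..v-1}. dirichlet \<Lambda> \<mu> f e (e + 1)"
  show ?case
  proof (cases "z = x + 1")
    case True
    then have "dirichlet \<Lambda> (tilted x a z c) f x z \<le> exp B * dirichlet \<Lambda> \<mu> f x z"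
      using less.prems by (intro dirichlet_tilted_le_exp) auto
    then show ?thesis using True by simp
  next
    case False
    then have "x + 1 \<in> {x<..<z}" using less.prems(2) by auto
    then obtain y where y: "y \<in> {x<..<z}" and y_max: "\<forall>v\<in>{x<..<z}. \<alpha> v \<le> \<alpha> y"
      using finite_obtains_argmax[of "{x<..<z}" \<alpha>] by blast
    then have y_in: "x < y" "y < z" by auto
    have IH_right: "dirichlet \<Lambda> (tilted y (\<alpha> y) z c) f y z \<le> exp B * real_of_int (z - y) * ?S y z"
      using less.hyps[of z y "\<alpha> y" c] y_in y_max less.prems by fastforce
    have IH_left: "dirichlet \<Lambda> (tilted x a y (\<alpha> y)) f x y \<le> exp B * real_of_int (y - x) * ?S x y"
      using less.hyps[of y x a "\<alpha> y"] y_in y_max less.prems by fastforce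
    have "dirichlet \<Lambda> (tilted x a z c) f x z
        \<le> real_of_int (z - x) / real_of_int (z - y) * dirichlet \<Lambda> (tilted y (\<alpha> y) z c) f y z
         + real_of_int (z - x) / real_of_int (y - x) * dirichlet \<Lambda> (tilted x a y (\<alpha> y)) f x y"
      using y_in less.prems by (intro dirichlet_tilted_split) auto
    also have "\<dots> \<le> real_of_int (z - x) / real_of_int (z - y) * (exp B * real_of_int (z - y) * ?S y z)
         + real_of_int (z - x) / real_of_int (y - x) * (exp B * real_of_int (y - x) * ?S x y)"
      using IH_right IH_left y_in by (intro add_mono mult_left_mono) auto
    also have "\<dots> = exp B * real_of_int (z - x) * (?S x y + ?S y z)"
      using y_in by (simp add: distrib_left)
    also have "?S x y + ?S y z = ?S x z"
    proof -
      have "{x..z-1} = {x..y-1} \<union> {y..z-1}" using y_in by auto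
      then show ?thesis by (simp add: sum.union_disjoint)
    qed
    finally show ?thesis .
  qed
qed

lemma dirichlet_le_adjacent:
  assumes "{x..z} \<subseteq> \<Lambda>" "x < z" "\<forall>v\<in>{x..z}. \<bar>\<alpha> v\<bar> \<le> B"
  shows "dirichlet \<Lambda> \<mu> f x z
    \<le> exp (6 * B) * real_of_int (z - x) * (\<Sum>e\<in>{x..z-1}. dirichlet \<Lambda> \<mu> f e (e + 1))"
proof -
  have xz_in: "x \<in> \<Lambda>" "z \<in> \<Lambda>" using assms(1,2) by auto
  have field_bounds: "\<forall>v\<in>{x..z}. \<alpha> v \<le> B \<and> - B \<le> \<alpha> v"
    using assms(3) by (auto simp: abs_le_iff)
  then have "- B \<le> \<alpha> x" "- B \<le> \<alpha> z" using assms(2) by auto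
  have "dirichlet \<Lambda> \<mu> f x z \<le> exp (5 * B) * dirichlet \<Lambda> (tilted x B z B) f x z"
  proof (rule dirichlet_le_scaled)
    fix \<xi> assume \<xi>: "\<xi> \<in> configs \<Lambda>" and "\<xi> x \<noteq> \<xi> z"
    then have "0 \<le> 5 * B + (\<alpha> x - B + \<alpha> z - B - B * real (\<xi> x) - B * real (\<xi> z))"
      using configs_values[OF \<xi> xz_in(1)] configs_values[OF \<xi> xz_in(2)] \<open>- B \<le> \<alpha> x\<close> \<open>- B \<le> \<alpha> z\<close>
      by auto
    then have "1 * \<mu> \<xi> \<le> (exp (5 * B) * exp (\<alpha> x - B + \<alpha> z - B - B * real (\<xi> x) - B * real (\<xi> z))) * \<mu> \<xi>"
      by (intro mult_right_mono nonneg[OF \<xi>]) (simp flip: exp_add)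
    then show "\<mu> \<xi> \<le> exp (5 * B) * tilted x B z B \<xi>"
      unfolding tilted_def by (simp only: mult_1 mult.assoc)
  qed
  also have "\<dots> \<le> exp (5 * B) * (exp B * real_of_int (z - x) * (\<Sum>e\<in>{x..z-1}. dirichlet \<Lambda> \<mu> f e (e + 1)))"
    using assms(1,2) field_bounds by (intro mult_left_mono dirichlet_tilted_le) auto
  also have "\<dots> = exp (6 * B) * real_of_int (z - x) * (\<Sum>e\<in>{x..z-1}. dirichlet \<Lambda> \<mu> f e (e + 1))"
  proof -
    have "exp (5 * B) * exp B = exp (6 * B)" by (simp flip: exp_add)
    then show ?thesis by (simp only: mult.assoc[symmetric])
  qed
  finally show ?thesis .
qed

end

theorem lemma5p2:
  fixes B :: real and L :: int and \<Lambda> :: "int set" and \<alpha> :: "int \<Rightarrow> real"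
    and \<mu> :: "(int \<Rightarrow> nat) \<Rightarrow> real" and f :: "(int \<Rightarrow> nat) \<Rightarrow> real"
  assumes "B \<ge> 0" and "L \<ge> 2" and "finite \<Lambda>" and "{1..L} \<subseteq> \<Lambda>"
    and "\<forall>x\<in>\<Lambda>. \<bar>\<alpha> x\<bar> \<le> B"
    and "bernoulli_measure \<Lambda> \<alpha> \<mu>"
  shows "integ \<Lambda> \<mu> (\<lambda>\<eta>. (f (exch 1 L \<eta>) - f \<eta>)^2)
         \<le> exp (13 * B) * real_of_int L *
            (\<Sum>x\<in>{1..L-1}. integ \<Lambda> \<mu> (\<lambda>\<eta>. (grad x (x+1) f \<eta>)^2))"
proof -
  interpret exchange_covariant \<Lambda> \<alpha> \<mu>
    using assms(3,6) by (rule bernoulli_measure_exchange_covariant)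
  let ?S = "\<Sum>x\<in>{1..L-1}. dirichlet \<Lambda> \<mu> f x (x + 1)"
  have "dirichlet \<Lambda> \<mu> f 1 L \<le> exp (6 * B) * real_of_int (L - 1) * ?S"
    using assms(2,4,5) by (intro dirichlet_le_adjacent) auto
  also have "\<dots> \<le> exp (13 * B) * real_of_int L * ?S"
    using assms(1,2) by (intro mult_right_mono mult_mono sum_nonneg dirichlet_nonneg nonneg) auto
  finally show ?thesis by (simp add: grad_def)
qed

end
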